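(* Let $a_0,a_1,a_2,b_0,b_1$ be complex numbers with $a_1\neq 0$ and $a_2\neq 0$. Let $(T(n,k))_{n\ge 0,\,k\in\mathbb{Z}}$ be defined by $T(0,0)=1$, $T(0,k)=0$ for $k\neq 0$, $T(n,k)=0$ for $k<0$, and for $n\ge 1$ and all $k$, \[ T(n,k)=(a_2 n+a_1 k+a_0)\,T(n-1,k)+(b_1 k+b_0)\,T(n-1,k-1). \] Then for all integers $n,k\ge 0$, \[ T(n,k)=\frac{(b_0+b_1\,|\,b_1)^{(\overline{k})}}{a_1^k\,k!}\sum_{j=0}^{k}(-1)^{k-j}\binom{k}{j}\prod_{r=1}^{n}\bigl(a_0+a_1 j+r a_2\bigr). \]
   Context: For a number $x$, a step $a$ and an integer $k\ge 0$, $(x\,|\,a)^{(\overline{k})}=x(x+a)(x+2a)\cdots(x+(k-1)a)$, with $(x\,|\,a)^{(\overline{0})}=1$. Empty products equal $1$. *)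

theory Defs
  imports Complex_Main
begin

definition rising_step :: "complex \<Rightarrow> complex \<Rightarrow> nat \<Rightarrow> complex" where
  "rising_step x a k = (\<Prod>i<k. x + of_nat i * a)"

end

theory Submission
  imports Defs
begin

text \<open>The alternating sum is the k-th forward difference at 0 of
  P_n(j) = prod_{r=1..n} (a0 + a1 j + r a2), S(n,k) = Delta^k P_n (0). Because
  P_{n+1}(j) = (a0 + (n+1) a2 + a1 j) P_n(j) and Delta^k (j f(j)) = k (Delta^k f + Delta^(k-1) f) at 0,
  S(n+1,k) = (a2 (n+1) + a1 k + a0) S(n,k) + a1 k S(n,k-1), while S(0,k) = [k = 0].
  The prefactor c_k satisfies a1 k c_k = (b1 k + b0) c_(k-1), so c_k S(n,k) obeys the recurrence
  of T and equals T(n,k) by induction on n.\<close>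

definition forward_difference :: "nat \<Rightarrow> (nat \<Rightarrow> 'a::comm_ring_1) \<Rightarrow> 'a" where
  "forward_difference k f = (\<Sum>j=0..k. (-1) ^ (k - j) * of_nat (k choose j) * f j)"

lemma forward_difference_const:
  "forward_difference k (\<lambda>_. c) = (if k = 0 then c else 0)"
proof -
  have "forward_difference k (\<lambda>_. c) = c * (\<Sum>j\<le>k. of_nat (k choose j) * 1 ^ j * (-1) ^ (k - j))"
    unfolding forward_difference_def by (simp add: sum_distrib_left atLeast0AtMost mult_ac)
  also have "\<dots> = c * (1 + (-1)) ^ k"
    by (simp only: binomial_ring)
  finally show ?thesis
    by (cases k) simp_all
qed

lemma forward_difference_add:
  "forward_difference k (\<lambda>j. f j + g j) = forward_difference k f + forward_difference k g"
  unfolding forward_difference_def by (simp add: distrib_left sum.distrib)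

lemma forward_difference_cmult:
  "forward_difference k (\<lambda>j. c * f j) = c * forward_difference k f"
  unfolding forward_difference_def by (simp add: sum_distrib_left mult_ac)

lemma of_nat_mult_choose_Suc:
  "of_nat j * of_nat (Suc k choose j)
     = of_nat (Suc k) * of_nat (Suc k choose j) - (of_nat (Suc k) * of_nat (k choose j) :: 'a::comm_ring_1)"
proof -
  have "j * (Suc k choose j) + Suc k * (k choose j) = Suc k * (Suc k choose j)"
  proof (cases "j \<le> Suc k")
    case True
    then have "j * (Suc k choose j) + (Suc k - j) * (Suc k choose j) = Suc k * (Suc k choose j)"
      by (simp flip: add_mult_distrib)
    then show ?thesis
      by (metis binomial_absorb_comp diff_Suc_1)
  next
    case False
    then show ?thesis
      by (simp add: binomial_eq_0)
  qed
  then have "of_nat (j * (Suc k choose j)) + of_nat (Suc k * (k choose j)) = (of_nat (Suc k * (Suc k choose j)) :: 'a)"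
    by (metis of_nat_add)
  then show ?thesis
    by (simp add: algebra_simps)
qed

lemma forward_difference_of_nat_mult:
  "forward_difference (Suc k) (\<lambda>j. of_nat j * f j)
     = of_nat (Suc k) * (forward_difference (Suc k) f + forward_difference k f)"
proof -
  have sign: "(-1) ^ (Suc k - j) * - of_nat (k choose j) = ((-1) ^ (k - j) * of_nat (k choose j) :: 'a)"
    for j
    by (cases "j \<le> k") (simp_all add: Suc_diff_le not_le binomial_eq_0)
  have summand: "(-1) ^ (Suc k - j) * of_nat (Suc k choose j) * (of_nat j * f j)
      = of_nat (Suc k) * ((-1) ^ (Suc k - j) * of_nat (Suc k choose j) * f j
          + (-1) ^ (k - j) * of_nat (k choose j) * f j)" for j
  proof -
    have "(-1) ^ (Suc k - j) * of_nat (Suc k choose j) * (of_nat j * f j)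
        = (-1) ^ (Suc k - j) * f j * (of_nat j * of_nat (Suc k choose j))"
      by (simp only: mult_ac)
    also have "\<dots> = of_nat (Suc k) * ((-1) ^ (Suc k - j) * of_nat (Suc k choose j) * f j
          + (-1) ^ (Suc k - j) * - of_nat (k choose j) * f j)"
      by (simp only: of_nat_mult_choose_Suc) (simp add: algebra_simps)
    finally show ?thesis
      by (simp only: sign)
  qed
  have "forward_difference (Suc k) (\<lambda>j. of_nat j * f j)
      = of_nat (Suc k) * (forward_difference (Suc k) f
          + (\<Sum>j=0..Suc k. (-1) ^ (k - j) * of_nat (k choose j) * f j))"
    unfolding forward_difference_def summand by (simp only: sum_distrib_left distrib_left sum.distrib)
  also have "(\<Sum>j=0..Suc k. (-1) ^ (k - j) * of_nat (k choose j) * f j) = forward_difference k f"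
    unfolding forward_difference_def by (simp add: sum.atLeast0_atMost_Suc binomial_eq_0)
  finally show ?thesis .
qed

definition product_difference :: "'a \<Rightarrow> 'a \<Rightarrow> 'a \<Rightarrow> nat \<Rightarrow> nat \<Rightarrow> 'a::comm_ring_1" where
  "product_difference a0 a1 a2 n k =
     forward_difference k (\<lambda>j. \<Prod>r=1..n. a0 + a1 * of_nat j + of_nat r * a2)"

lemma product_difference_0:
  "product_difference a0 a1 a2 0 k = (if k = 0 then 1 else 0)"
  unfolding product_difference_def by (simp add: forward_difference_const)

lemma product_difference_Suc:
  "product_difference a0 a1 a2 (Suc n) k
     = (a0 + of_nat (Suc n) * a2) * product_difference a0 a1 a2 n k
       + a1 * forward_difference k (\<lambda>j. of_nat j * (\<Prod>r=1..n. a0 + a1 * of_nat j + of_nat r * a2))"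
proof -
  have "(\<Prod>r=1..Suc n. a0 + a1 * of_nat j + of_nat r * a2)
      = (a0 + of_nat (Suc n) * a2) * (\<Prod>r=1..n. a0 + a1 * of_nat j + of_nat r * a2)
        + a1 * (of_nat j * (\<Prod>r=1..n. a0 + a1 * of_nat j + of_nat r * a2))" for j
    by (simp add: prod.nat_ivl_Suc' algebra_simps)
  then show ?thesis
    unfolding product_difference_def
    by (simp add: forward_difference_add forward_difference_cmult)
qed

lemma product_difference_Suc_0:
  "product_difference a0 a1 a2 (Suc n) 0 = (a2 * of_nat (Suc n) + a0) * product_difference a0 a1 a2 n 0"
  by (simp add: product_difference_Suc forward_difference_def algebra_simps)

lemma product_difference_Suc_Suc:
  "product_difference a0 a1 a2 (Suc n) (Suc k)
     = (a2 * of_nat (Suc n) + a1 * of_nat (Suc k) + a0) * product_difference a0 a1 a2 n (Suc k)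
       + a1 * of_nat (Suc k) * product_difference a0 a1 a2 n k"
  unfolding product_difference_Suc forward_difference_of_nat_mult
  by (simp add: product_difference_def algebra_simps)

lemma rising_step_Suc: "rising_step x a (Suc k) = rising_step x a k * (x + of_nat k * a)"
  unfolding rising_step_def by simp

lemma rising_step_quotient_Suc:
  assumes "a1 \<noteq> 0"
  shows "rising_step x b (Suc k) / (a1 ^ Suc k * of_nat (fact (Suc k))) * (a1 * of_nat (Suc k))
           = (x + of_nat k * b) * (rising_step x b k / (a1 ^ k * of_nat (fact k)))"
proof -
  have "a1 ^ Suc k * of_nat (fact (Suc k)) = (a1 * of_nat (Suc k)) * (a1 ^ k * of_nat (fact k))"
    by (simp only: power_Suc fact_Suc of_nat_mult of_nat_id mult_ac)
  moreover have "a1 * of_nat (Suc k) \<noteq> 0"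
    using assms by (simp del: of_nat_Suc)
  ultimately show ?thesis
    by (simp add: rising_step_Suc)
qed

lemma triangle_recurrence_closed_form:
  fixes T :: "nat \<Rightarrow> int \<Rightarrow> 'a::comm_ring_1"
  assumes T_0: "\<And>k. T 0 k = (if k = 0 then 1 else 0)"
    and T_neg: "\<And>n k. k < 0 \<Longrightarrow> T n k = 0"
    and T_Suc: "\<And>n k. T (Suc n) k = (a2 * of_nat (Suc n) + a1 * of_int k + a0) * T n k
                                   + (b1 * of_int k + b0) * T n (k - 1)"
    and c_0: "c 0 = 1"
    and c_Suc: "\<And>m. (b1 * of_nat (Suc m) + b0) * c m = c (Suc m) * (a1 * of_nat (Suc m))"
  shows "T n (int k) = c k * product_difference a0 a1 a2 n k"
proof (induction n arbitrary: k)
  case 0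
  show ?case
    using T_0 c_0 by (simp add: product_difference_0)
next
  case (Suc n)
  show ?case
  proof (cases k)
    case 0
    then show ?thesis
      using T_Suc[of n 0] T_neg[of "-1" n] Suc.IH[of 0] by (simp add: product_difference_Suc_0)
  next
    case (Suc m)
    then have "T (Suc n) (int k)
        = (a2 * of_nat (Suc n) + a1 * of_nat (Suc m) + a0) * (c (Suc m) * product_difference a0 a1 a2 n (Suc m))
          + (b1 * of_nat (Suc m) + b0) * c m * product_difference a0 a1 a2 n m"
      using T_Suc[of n "int k"] Suc.IH[of k] Suc.IH[of m] by simp
    also have "\<dots> = c (Suc m) * product_difference a0 a1 a2 (Suc n) (Suc m)"
      unfolding c_Suc product_difference_Suc_Suc by (simp add: algebra_simps)
    finally show ?thesis
      using \<open>k = Suc m\<close> by simp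
  qed
qed

theorem mainTheorem2:
  fixes a0 a1 a2 b0 b1 :: complex
    and T :: "nat \<Rightarrow> int \<Rightarrow> complex"
  assumes "a1 \<noteq> 0" and "a2 \<noteq> 0"
    and "T 0 0 = 1"
    and "\<And>k. k \<noteq> 0 \<Longrightarrow> T 0 k = 0"
    and "\<And>n k. k < 0 \<Longrightarrow> T n k = 0"
    and "\<And>n k. n \<ge> 1 \<Longrightarrow>
           T n k = (a2 * of_nat n + a1 * of_int k + a0) * T (n - 1) k
                   + (b1 * of_int k + b0) * T (n - 1) (k - 1)"
  shows "\<And>n k::nat. T n (int k) =
           rising_step (b0 + b1) b1 k / (a1 ^ k * of_nat (fact k))
           * (\<Sum>j=0..k. (-1) ^ (k - j) * of_nat (k choose j)
                * (\<Prod>r=1..n. a0 + a1 * of_nat j + of_nat r * a2))"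
proof -
  fix n k :: nat
  define c where "c k = rising_step (b0 + b1) b1 k / (a1 ^ k * of_nat (fact k))" for k
  have "T n (int k) = c k * product_difference a0 a1 a2 n k"
  proof (rule triangle_recurrence_closed_form)
    show "T 0 k = (if k = 0 then 1 else 0)" for k
      using assms(3,4) by simp
    show "T (Suc n) k = (a2 * of_nat (Suc n) + a1 * of_int k + a0) * T n k
                        + (b1 * of_int k + b0) * T n (k - 1)" for n k
      using assms(6)[of "Suc n" k] by simp
    show "c 0 = 1"
      by (simp add: c_def rising_step_def)
    show "(b1 * of_nat (Suc m) + b0) * c m = c (Suc m) * (a1 * of_nat (Suc m))" for m
      unfolding c_def rising_step_quotient_Suc[OF assms(1)] by (simp add: algebra_simps)
  qed (use assms(5) in simp)
  then show "T n (int k) = rising_step (b0 + b1) b1 k / (a1 ^ k * of_nat (fact k))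
           * (\<Sum>j=0..k. (-1) ^ (k - j) * of_nat (k choose j)
                * (\<Prod>r=1..n. a0 + a1 * of_nat j + of_nat r * a2))"
    unfolding c_def product_difference_def forward_difference_def .
qed

end
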